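(* Let $\delta\in(0,1/2)$, let $V$ be a finite set of $[-1,1]$-valued trees of depth $n$, let $\mathbf{p}$ be a $[\delta,1-\delta]$-valued tree of depth $n$, and let $c>0$. Then $$\mathbb{E}_y\max_{\mathbf{v}\in V}\Big[\sum_{t=1}^n\eta(\mathbf{p}_t(y),y_t)\mathbf{v}_t(y)-c\,\mathbf{v}_t(y)^2\Big]\le\frac{\log|V|}{\delta\log(1+\frac c2)},$$ where $y_t\mid y_1,\dots,y_{t-1}\sim\mathrm{Bernoulli}(\mathbf{p}_t(y_1,\dots,y_{t-1}))$. Furthermore, the same upper bound holds if $\mathbf{p}$ is any $[0,1]$-valued tree but the summation is restricted to $\{t:\mathbf{p}_t(y)\in[\delta,1-\delta]\}$.
   Context: A $\mathcal{Z}$-valued tree $\mathbf{z}$ of depth $n$ is a sequence of maps $\mathbf{z}_t:\{0,1\}^{t-1}\to\mathcal{Z}$, $t=1,\dots,n$; for $y\in\{0,1\}^n$, $\mathbf{z}_t(y)=\mathbf{z}_t(y_1,\dots,y_{t-1})$. $\eta(p,a)=-\mathbf{1}\{a=1\}p^{-1}+\mathbf{1}\{a=0\}(1-p)^{-1}$. Bernoulli$(p)$ means the $\{0,1\}$-valued variable equal to $1$ with probability $p$. *)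

theory Defs
  imports Complex_Main
begin

text \<open>A Z-valued tree of depth n is represented as z :: nat => bool list => 'z,
  where (0-indexed) the t-th map, t < n, is z t applied to prefixes of length t
  (True encodes 1, False encodes 0). Thus z_{t+1}(y) in the paper is z t (take t y).\<close>

definition tree_dom :: "nat \<Rightarrow> nat \<Rightarrow> bool list \<Rightarrow> bool" where
  "tree_dom n t ys \<longleftrightarrow> t < n \<and> length ys = t"

text \<open>Canonical real tree with values in [a,b]: values in [a,b] on the domain, 0 outside
  (so that distinct elements of a set of trees are distinct as trees).\<close>
definition real_tree :: "nat \<Rightarrow> real \<Rightarrow> real \<Rightarrow> (nat \<Rightarrow> bool list \<Rightarrow> real) \<Rightarrow> bool" where
  "real_tree n a b z \<longleftrightarrow>
     (\<forall>t ys. tree_dom n t ys \<longrightarrow> a \<le> z t ys \<and> z t ys \<le> b) \<and>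
     (\<forall>t ys. \<not> tree_dom n t ys \<longrightarrow> z t ys = 0)"

definition eta :: "real \<Rightarrow> bool \<Rightarrow> real" where
  "eta p a = (if a then - inverse p else inverse (1 - p))"

definition path_prob :: "nat \<Rightarrow> (nat \<Rightarrow> bool list \<Rightarrow> real) \<Rightarrow> bool list \<Rightarrow> real" where
  "path_prob n p y = (\<Prod>t<n. if y ! t then p t (take t y) else 1 - p t (take t y))"

definition tree_expect :: "nat \<Rightarrow> (nat \<Rightarrow> bool list \<Rightarrow> real) \<Rightarrow> (bool list \<Rightarrow> real) \<Rightarrow> real" where
  "tree_expect n p f = (\<Sum>y\<in>{y. length y = n}. path_prob n p y * f y)"

end

theory Submission
  imports Defs
begin

text \<open>
  Put \<open>\<beta> = \<delta> ln (1 + c/2)\<close> and \<open>X\<^sub>t = \<eta>(p\<^sub>t, y\<^sub>t) v\<^sub>t - c v\<^sub>t\<^sup>2\<close>. Conditionally on the past,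
  \<open>\<eta>(p\<^sub>t, y\<^sub>t)\<close> has mean \<open>0\<close> and \<open>|\<beta> \<eta> v\<^sub>t| \<le> ln (1 + c/2)\<close>, so the Bennett-type bound
  \<open>e\<^sup>u \<le> 1 + u + u\<^sup>2 (e\<^sup>L - 1 - L)/L\<^sup>2\<close> for \<open>|u| \<le> L\<close>, together with \<open>1/p + 1/(1-p) \<le> 2/\<delta>\<close>
  and \<open>c/(2+c) \<le> ln (1 + c/2)\<close>, shows that the quadratic penalty absorbs the variance:
  \<open>E[exp (\<beta> X\<^sub>t) | y\<^sub>1 \<dots> y\<^sub>t\<^sub>-\<^sub>1] \<le> 1\<close>. Hence \<open>exp (\<beta> \<Sum>\<^sub>t X\<^sub>t)\<close> is a supermartingale and
  \<open>E exp (\<beta> S\<^sub>v) \<le> 1\<close> for every \<open>v \<in> V\<close>. Since \<open>\<beta> max\<^sub>v S\<^sub>v \<le> ln \<Sum>\<^sub>v exp (\<beta> S\<^sub>v)\<close>, Jensen's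
  inequality for \<open>ln\<close> gives \<open>E max\<^sub>v S\<^sub>v \<le> ln |V| / \<beta>\<close>. Setting \<open>X\<^sub>t = 0\<close> in rounds with
  \<open>p\<^sub>t \<notin> [\<delta>, 1 - \<delta>]\<close> keeps the supermartingale property, which gives the restricted version.
\<close>

lemma exp_le_one_plus_quadratic:
  fixes u L :: real
  assumes "\<bar>u\<bar> \<le> L" "0 < L"
  shows "exp u \<le> 1 + u + u\<^sup>2 * ((exp L - 1 - L) / L\<^sup>2)"
proof -
  define tail where "tail x n = inverse (fact (n + 2)) * x ^ (n + 2)" for x :: real and n
  have summable_tail: "summable (tail x)" for x
    unfolding tail_def using summable_exp[of x, THEN summable_ignore_initial_segment, of 2] by simp
  have exp_tail: "exp x = 1 + x + suminf (tail x)" for x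
    unfolding tail_def using exp_first_two_terms[of x] by simp
  have "tail u n \<le> tail L n * (u\<^sup>2 / L\<^sup>2)" for n
  proof -
    have "u ^ (n + 2) = u\<^sup>2 * u ^ n" by (simp only: power_add mult.commute)
    also have "\<dots> \<le> u\<^sup>2 * L ^ n"
    proof (rule mult_left_mono)
      have "u ^ n \<le> \<bar>u\<bar> ^ n" using abs_ge_self[of "u ^ n"] by (simp add: power_abs)
      also have "\<dots> \<le> L ^ n" using assms(1) by (intro power_mono) simp_all
      finally show "u ^ n \<le> L ^ n" .
    qed simp
    also have "\<dots> = L ^ (n + 2) * (u\<^sup>2 / L\<^sup>2)"
      using assms by (simp add: power_add power2_eq_square field_simps)
    finally have "u ^ (n + 2) \<le> L ^ (n + 2) * (u\<^sup>2 / L\<^sup>2)" .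
    from mult_left_mono[OF this, of "inverse (fact (n + 2))"] show ?thesis
      unfolding tail_def by (simp add: mult.assoc)
  qed
  then have "suminf (tail u) \<le> (\<Sum>n. tail L n * (u\<^sup>2 / L\<^sup>2))"
    by (intro suminf_le summable_mult2 summable_tail)
  also have "\<dots> = suminf (tail L) * (u\<^sup>2 / L\<^sup>2)"
    by (rule suminf_mult2[OF summable_tail, symmetric])
  finally have "suminf (tail u) \<le> suminf (tail L) * (u\<^sup>2 / L\<^sup>2)" .
  then show ?thesis
    using exp_tail[of u] exp_tail[of L] by (simp add: mult.commute)
qed

lemma ln_one_plus_ge_divide:
  fixes x :: real
  assumes "-1 < x"
  shows "x / (1 + x) \<le> ln (1 + x)"
proof -
  have "ln (inverse (1 + x)) \<le> inverse (1 + x) - 1"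
    using assms by (intro ln_le_minus_one) simp
  moreover have "inverse (1 + x) - 1 = - (x / (1 + x))"
    using assms by (simp add: field_simps)
  ultimately show ?thesis
    using assms by (simp add: ln_inverse)
qed

lemma two_point_exp_le:
  fixes p x L :: real
  assumes "0 < p" "p < 1" "0 < L" "\<bar>x\<bar> \<le> L * p" "\<bar>x\<bar> \<le> L * (1 - p)"
  shows "p * exp (- x / p) + (1 - p) * exp (x / (1 - p))
           \<le> 1 + x\<^sup>2 / (p * (1 - p)) * ((exp L - 1 - L) / L\<^sup>2)"
proof -
  define K where "K = (exp L - 1 - L) / L\<^sup>2"
  have "\<bar>- x / p\<bar> \<le> L" "\<bar>x / (1 - p)\<bar> \<le> L"
    using assms by (simp_all add: abs_divide divide_le_eq)
  then have "p * exp (- x / p) + (1 - p) * exp (x / (1 - p))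
      \<le> p * (1 + - x / p + (- x / p)\<^sup>2 * K) + (1 - p) * (1 + x / (1 - p) + (x / (1 - p))\<^sup>2 * K)"
    using assms unfolding K_def by (intro add_mono mult_left_mono exp_le_one_plus_quadratic) auto
  also have "\<dots> = 1 + (x\<^sup>2 / p + x\<^sup>2 / (1 - p)) * K"
  proof -
    have "a * (1 + y / a + (y / a)\<^sup>2 * K) = a + y + y\<^sup>2 / a * K" if "a \<noteq> 0" for a y
      using that by (simp add: field_simps power2_eq_square)
    from this[of p "- x"] this[of "1 - p" x] show ?thesis
      using assms by (simp add: algebra_simps)
  qed
  also have "x\<^sup>2 / p + x\<^sup>2 / (1 - p) = x\<^sup>2 / (p * (1 - p))"
    using assms by (simp add: field_simps)
  finally show ?thesis unfolding K_def .
qed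

lemma two_point_exp_le_exp_sq:
  fixes \<delta> c q w :: real
  assumes \<delta>: "0 < \<delta>" "\<delta> < 1/2" and c: "0 < c" and q: "\<delta> \<le> q" "q \<le> 1 - \<delta>" and w: "\<bar>w\<bar> \<le> 1"
  defines "\<beta> \<equiv> \<delta> * ln (1 + c/2)"
  shows "q * exp (- (\<beta> * w) / q) + (1 - q) * exp (\<beta> * w / (1 - q)) \<le> exp (\<beta> * c * w\<^sup>2)"
proof -
  define L where "L = ln (1 + c/2)"
  define x where "x = \<beta> * w"
  have L: "0 < L" "exp L = 1 + c/2" "L \<le> c/2"
    using c ln_add_one_self_le_self[of "c/2"] by (simp_all add: L_def)
  have "c - 2 * L \<le> c * L"
    using ln_one_plus_ge_divide[of "c/2"] c by (simp add: L_def field_simps)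
  then have "\<delta> * w\<^sup>2 * (c - 2 * L) \<le> \<delta> * w\<^sup>2 * (c * L)"
    using \<delta> by (intro mult_left_mono) auto
  then have gap: "\<delta> * w\<^sup>2 * (c - 2 * L) \<le> \<beta> * c * w\<^sup>2"
    by (simp add: \<beta>_def L_def algebra_simps)
  have rescale: "x\<^sup>2 / (\<delta> / 2) * ((c/2 - L) / L\<^sup>2) = \<delta> * w\<^sup>2 * (c - 2 * L)"
  proof -
    have "x\<^sup>2 / (\<delta> / 2) = 2 * \<delta> * w\<^sup>2 * L\<^sup>2"
      using \<delta> by (simp add: x_def \<beta>_def L_def power_mult_distrib power2_eq_square)
    then show ?thesis using L by (simp add: field_simps)
  qed
  have "\<bar>x\<bar> = L * (\<delta> * \<bar>w\<bar>)"
    using L \<delta> by (simp add: x_def \<beta>_def L_def abs_mult)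
  also have "\<dots> \<le> L * \<delta>"
    using L \<delta> w by (intro mult_left_mono) (simp_all add: mult_left_le)
  finally have "\<bar>x\<bar> \<le> L * q" "\<bar>x\<bar> \<le> L * (1 - q)"
    using q L(1) by (smt (verit) mult_left_mono)+
  moreover have "0 < q" "q < 1" using q \<delta> by auto
  ultimately have "q * exp (- x / q) + (1 - q) * exp (x / (1 - q))
      \<le> 1 + x\<^sup>2 / (q * (1 - q)) * ((c/2 - L) / L\<^sup>2)"
    using two_point_exp_le[of q L x] L by simp
  also have "\<dots> \<le> 1 + x\<^sup>2 / (\<delta> / 2) * ((c/2 - L) / L\<^sup>2)"
  proof -
    have "0 \<le> (q - \<delta>) * (1 - \<delta> - q)" using q by simp
    then have "\<delta> * (1 - \<delta>) \<le> q * (1 - q)" by (simp add: algebra_simps)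
    moreover have "\<delta> / 2 \<le> \<delta> * (1 - \<delta>)" using \<delta> by simp
    ultimately have "\<delta> / 2 \<le> q * (1 - q)" by linarith
    then show ?thesis
      using \<delta> L by (intro add_left_mono mult_right_mono divide_left_mono) auto
  qed
  also have "\<dots> = 1 + \<delta> * w\<^sup>2 * (c - 2 * L)"
    using rescale by simp
  also have "\<dots> \<le> exp (\<beta> * c * w\<^sup>2)"
    using gap exp_ge_add_one_self[of "\<beta> * c * w\<^sup>2"] by linarith
  finally show ?thesis unfolding x_def .
qed

definition offset_term :: "real \<Rightarrow> real \<Rightarrow> real \<Rightarrow> bool \<Rightarrow> real \<Rightarrow> real" where
  "offset_term \<delta> c q a w = (if \<delta> \<le> q \<and> q \<le> 1 - \<delta> then eta q a * w - c * w\<^sup>2 else 0)"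

lemma offset_term_exp_mean_le_one:
  fixes \<delta> c q w :: real
  assumes \<delta>: "0 < \<delta>" "\<delta> < 1/2" and c: "0 < c" and w: "\<bar>w\<bar> \<le> 1"
  shows "q * exp (\<delta> * ln (1 + c/2) * offset_term \<delta> c q True w)
           + (1 - q) * exp (\<delta> * ln (1 + c/2) * offset_term \<delta> c q False w) \<le> 1"
proof (cases "\<delta> \<le> q \<and> q \<le> 1 - \<delta>")
  case False
  then show ?thesis by (simp only: offset_term_def if_False) simp
next
  case True
  define \<beta> where "\<beta> = \<delta> * ln (1 + c/2)"
  have "exp (\<beta> * offset_term \<delta> c q a w)
      = exp (- (\<beta> * c * w\<^sup>2)) * exp (if a then - (\<beta> * w) / q else \<beta> * w / (1 - q))" for a
    using True by (simp add: offset_term_def eta_def field_simps flip: exp_add)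
  then have "q * exp (\<beta> * offset_term \<delta> c q True w) + (1 - q) * exp (\<beta> * offset_term \<delta> c q False w)
      = exp (- (\<beta> * c * w\<^sup>2)) * (q * exp (- (\<beta> * w) / q) + (1 - q) * exp (\<beta> * w / (1 - q)))"
    by (simp add: algebra_simps)
  also have "\<dots> \<le> exp (- (\<beta> * c * w\<^sup>2)) * exp (\<beta> * c * w\<^sup>2)"
    using two_point_exp_le_exp_sq[OF \<delta> c _ _ w] True unfolding \<beta>_def
    by (intro mult_left_mono) auto
  finally show ?thesis by (simp add: \<beta>_def flip: exp_add)
qed

lemma finite_bool_lists_length: "finite {y :: bool list. length y = n}"
  using finite_lists_length_eq[of "UNIV :: bool set" n] by simp

lemma sum_bool_lists_length_Suc:
  "(\<Sum>y | length y = Suc n. f y) = (\<Sum>y | length y = n. f (y @ [True]) + f (y @ [False]))"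
proof -
  let ?L = "{y :: bool list. length y = n}"
  have "{y :: bool list. length y = Suc n} = (\<lambda>y. y @ [True]) ` ?L \<union> (\<lambda>y. y @ [False]) ` ?L"
    by (auto simp: length_Suc_conv_rev image_iff)
  then have "(\<Sum>y | length y = Suc n. f y)
      = (\<Sum>y\<in>(\<lambda>y. y @ [True]) ` ?L. f y) + (\<Sum>y\<in>(\<lambda>y. y @ [False]) ` ?L. f y)"
    by (simp only:) (rule sum.union_disjoint; auto simp: finite_bool_lists_length)
  also have "\<dots> = (\<Sum>y\<in>?L. f (y @ [True])) + (\<Sum>y\<in>?L. f (y @ [False]))"
    by (simp add: sum.reindex inj_on_def)
  finally show ?thesis by (simp add: sum.distrib)
qed

lemma path_prob_snoc:
  assumes "length y = n"
  shows "path_prob (Suc n) p (y @ [a]) = path_prob n p y * (if a then p n y else 1 - p n y)"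
proof -
  have "(\<Prod>t<n. if (y @ [a]) ! t then p t (take t (y @ [a])) else 1 - p t (take t (y @ [a])))
      = (\<Prod>t<n. if y ! t then p t (take t y) else 1 - p t (take t y))"
    using assms by (intro prod.cong) (auto simp: nth_append)
  then show ?thesis
    using assms by (simp add: path_prob_def nth_append)
qed

lemma path_prob_nonneg:
  assumes "\<And>t ys. tree_dom n t ys \<Longrightarrow> 0 \<le> p t ys \<and> p t ys \<le> 1" and "length y = n"
  shows "0 \<le> path_prob n p y"
  unfolding path_prob_def
proof (intro prod_nonneg)
  fix t assume "t \<in> {..<n}"
  with assms(2) have "tree_dom n t (take t y)" by (simp add: tree_dom_def)
  from assms(1)[OF this] show "0 \<le> (if y ! t then p t (take t y) else 1 - p t (take t y))" by simp
qed

lemma sum_path_prob: "(\<Sum>y | length y = n. path_prob n p y) = 1"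
proof (induction n)
  case 0
  have "{y :: bool list. length y = 0} = {[]}" by auto
  then show ?case by (simp add: path_prob_def)
next
  case (Suc n)
  have "path_prob (Suc n) p (y @ [True]) + path_prob (Suc n) p (y @ [False]) = path_prob n p y"
    if "length y = n" for y
    using that by (simp add: path_prob_snoc algebra_simps)
  then show ?case
    unfolding sum_bool_lists_length_Suc Suc.IH[symmetric] by (intro sum.cong) auto
qed

lemma tree_expect_cong:
  "(\<And>y. length y = n \<Longrightarrow> f y = g y) \<Longrightarrow> tree_expect n p f = tree_expect n p g"
  unfolding tree_expect_def by (intro sum.cong) auto

lemma tree_expect_exp_sum_le_one:
  assumes "\<And>t ys. tree_dom n t ys \<Longrightarrow> 0 \<le> p t ys \<and> p t ys \<le> 1"
    and "\<And>t ys. tree_dom n t ys \<Longrightarrow> p t ys * exp (g t ys True) + (1 - p t ys) * exp (g t ys False) \<le> 1"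
  shows "tree_expect n p (\<lambda>y. exp (\<Sum>t<n. g t (take t y) (y ! t))) \<le> 1"
  using assms
proof (induction n)
  case 0
  have "{y :: bool list. length y = 0} = {[]}" by auto
  then show ?case by (simp add: tree_expect_def path_prob_def)
next
  case (Suc n)
  define G where "G y = (\<Sum>t<n. g t (take t y) (y ! t))" for y
  have G_snoc: "(\<Sum>t<Suc n. g t (take t (y @ [a])) ((y @ [a]) ! t)) = G y + g n y a"
    if "length y = n" for y a
  proof -
    have "(\<Sum>t<n. g t (take t (y @ [a])) ((y @ [a]) ! t)) = G y"
      unfolding G_def using that by (intro sum.cong) (auto simp: nth_append)
    then show ?thesis using that nth_append_length[of y a "[]"] by simp
  qed
  have step: "path_prob (Suc n) p (y @ [True]) * exp (G y + g n y True)
      + path_prob (Suc n) p (y @ [False]) * exp (G y + g n y False)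
      \<le> path_prob n p y * exp (G y)" if "length y = n" for y
  proof -
    have "tree_dom (Suc n) n y" using that by (simp add: tree_dom_def)
    then have "p n y * exp (g n y True) + (1 - p n y) * exp (g n y False) \<le> 1"
      by (rule Suc.prems(2))
    moreover have "0 \<le> path_prob n p y"
      by (rule path_prob_nonneg[OF _ that]) (use Suc.prems(1) in \<open>auto simp: tree_dom_def\<close>)
    ultimately have "path_prob n p y * exp (G y)
        * (p n y * exp (g n y True) + (1 - p n y) * exp (g n y False)) \<le> path_prob n p y * exp (G y)"
      by (simp add: mult_left_le)
    then show ?thesis
      using that by (simp add: path_prob_snoc exp_add algebra_simps)
  qed
  have "tree_expect (Suc n) p (\<lambda>y. exp (\<Sum>t<Suc n. g t (take t y) (y ! t)))
      \<le> tree_expect n p (\<lambda>y. exp (G y))"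
    unfolding tree_expect_def sum_bool_lists_length_Suc
    by (intro sum_mono) (simp only: mem_Collect_eq G_snoc step)
  also have "\<dots> \<le> 1"
    unfolding G_def using Suc.prems by (intro Suc.IH) (auto simp: tree_dom_def)
  finally show ?case .
qed

lemma sum_weighted_pos:
  fixes w Z :: "'a \<Rightarrow> real"
  assumes "finite Y" "\<And>y. y \<in> Y \<Longrightarrow> 0 \<le> w y" "sum w Y = 1" "\<And>y. y \<in> Y \<Longrightarrow> 0 < Z y"
  shows "0 < (\<Sum>y\<in>Y. w y * Z y)"
proof -
  obtain y0 where "y0 \<in> Y" "0 < w y0"
    using sum_nonpos[of Y w] assms(3) by force
  then show ?thesis
  proof (intro sum_pos2[OF assms(1)])
    show "0 \<le> w y * Z y" if "y \<in> Y" for y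
      using assms(2,4)[OF that] by simp
  qed (use assms(4) in auto)
qed

lemma sum_weighted_ln_le_ln_sum:
  fixes w Z :: "'a \<Rightarrow> real"
  assumes "finite Y" "\<And>y. y \<in> Y \<Longrightarrow> 0 \<le> w y" "sum w Y = 1" "\<And>y. y \<in> Y \<Longrightarrow> 0 < Z y"
  shows "(\<Sum>y\<in>Y. w y * ln (Z y)) \<le> ln (\<Sum>y\<in>Y. w y * Z y)"
proof -
  define M where "M = (\<Sum>y\<in>Y. w y * Z y)"
  have M: "0 < M"
    unfolding M_def using assms by (rule sum_weighted_pos)
  have tangent: "ln (Z y) \<le> ln M + Z y / M - 1" if "y \<in> Y" for y
    using ln_le_minus_one[of "Z y / M"] M assms(4)[OF that] by (simp add: ln_div)
  have "(\<Sum>y\<in>Y. w y * ln (Z y)) \<le> (\<Sum>y\<in>Y. w y * (ln M + Z y / M - 1))"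
    using assms tangent by (intro sum_mono mult_left_mono) auto
  also have "\<dots> = (\<Sum>y\<in>Y. (ln M - 1) * w y + w y * Z y / M)"
    by (intro sum.cong) (simp_all add: algebra_simps)
  also have "\<dots> = (ln M - 1) * sum w Y + M / M"
    by (simp add: M_def sum.distrib sum_distrib_left flip: sum_divide_distrib)
  also have "\<dots> = ln M"
    using assms(3) M by simp
  finally show ?thesis unfolding M_def .
qed

lemma sum_weighted_Max_le_ln_card:
  fixes w :: "'a \<Rightarrow> real" and S :: "'b \<Rightarrow> 'a \<Rightarrow> real"
  assumes "finite Y" "\<And>y. y \<in> Y \<Longrightarrow> 0 \<le> w y" "sum w Y = 1"
    and "finite V" "V \<noteq> {}" "0 < \<beta>"
    and exp_moment: "\<And>v. v \<in> V \<Longrightarrow> (\<Sum>y\<in>Y. w y * exp (\<beta> * S v y)) \<le> 1"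
  shows "(\<Sum>y\<in>Y. w y * Max ((\<lambda>v. S v y) ` V)) \<le> ln (card V) / \<beta>"
proof -
  define Z where "Z y = (\<Sum>v\<in>V. exp (\<beta> * S v y))" for y
  have Z_pos: "0 < Z y" for y
    unfolding Z_def using assms by (intro sum_pos) auto
  have Max_le: "\<beta> * Max ((\<lambda>v. S v y) ` V) \<le> ln (Z y)" for y
  proof -
    have "Max ((\<lambda>v. S v y) ` V) \<in> (\<lambda>v. S v y) ` V"
      using assms by (intro Max_in) auto
    then obtain v where "v \<in> V" "Max ((\<lambda>v. S v y) ` V) = S v y"
      by auto
    moreover have "exp (\<beta> * S v y) \<le> Z y"
      unfolding Z_def using assms \<open>v \<in> V\<close> by (intro member_le_sum) auto
    ultimately show ?thesis
      using Z_pos by (simp add: ln_ge_iff)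
  qed
  have "\<beta> * (\<Sum>y\<in>Y. w y * Max ((\<lambda>v. S v y) ` V)) \<le> (\<Sum>y\<in>Y. w y * ln (Z y))"
    unfolding sum_distrib_left
  proof (intro sum_mono)
    fix y assume "y \<in> Y"
    with mult_left_mono[OF Max_le, of "w y" y] assms(2) show "\<beta> * (w y * Max ((\<lambda>v. S v y) ` V)) \<le> w y * ln (Z y)"
      by (simp add: mult.left_commute)
  qed
  also have "\<dots> \<le> ln (\<Sum>y\<in>Y. w y * Z y)"
    using assms Z_pos by (intro sum_weighted_ln_le_ln_sum)
  also have "\<dots> \<le> ln (card V)"
  proof -
    have "(\<Sum>y\<in>Y. w y * Z y) = (\<Sum>v\<in>V. \<Sum>y\<in>Y. w y * exp (\<beta> * S v y))"
      unfolding Z_def by (simp add: sum_distrib_left sum.swap[of _ Y])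
    also have "\<dots> \<le> card V"
      using sum_mono[OF exp_moment] by simp
    finally have "(\<Sum>y\<in>Y. w y * Z y) \<le> card V" .
    moreover have "0 < (\<Sum>y\<in>Y. w y * Z y)"
      using assms Z_pos by (intro sum_weighted_pos)
    ultimately show ?thesis by simp
  qed
  finally show ?thesis
    using assms by (simp add: field_simps)
qed

lemma sum_restricted_eq_sum_offset_term:
  "(\<Sum>t\<in>{t. t < n \<and> \<delta> \<le> p t (take t y) \<and> p t (take t y) \<le> 1 - \<delta>}.
      eta (p t (take t y)) (y ! t) * v t (take t y) - c * (v t (take t y))\<^sup>2)
   = (\<Sum>t<n. offset_term \<delta> c (p t (take t y)) (y ! t) (v t (take t y)))"
proof -
  have "{t. t < n \<and> \<delta> \<le> p t (take t y) \<and> p t (take t y) \<le> 1 - \<delta>}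
      = {t \<in> {..<n}. \<delta> \<le> p t (take t y) \<and> p t (take t y) \<le> 1 - \<delta>}"
    by auto
  then show ?thesis
    unfolding offset_term_def by (simp only:) (rule sum.inter_filter, simp)
qed

lemma tree_expect_Max_offset_term_le:
  fixes \<delta> c :: real and V :: "(nat \<Rightarrow> bool list \<Rightarrow> real) set"
  assumes \<delta>: "0 < \<delta>" "\<delta> < 1/2" and c: "0 < c"
    and V: "finite V" "V \<noteq> {}" "\<forall>v\<in>V. real_tree n (-1) 1 v"
    and p: "\<And>t ys. tree_dom n t ys \<Longrightarrow> 0 \<le> p t ys \<and> p t ys \<le> 1"
  shows "tree_expect n p (\<lambda>y. Max ((\<lambda>v. \<Sum>t<n. offset_term \<delta> c (p t (take t y)) (y ! t) (v t (take t y))) ` V))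
           \<le> ln (card V) / (\<delta> * ln (1 + c/2))"
proof -
  define \<beta> where "\<beta> = \<delta> * ln (1 + c/2)"
  have "0 < \<beta>" using \<delta> c by (simp add: \<beta>_def)
  have exp_moment: "tree_expect n p
      (\<lambda>y. exp (\<beta> * (\<Sum>t<n. offset_term \<delta> c (p t (take t y)) (y ! t) (v t (take t y))))) \<le> 1"
    if "v \<in> V" for v
  proof -
    have "\<bar>v t ys\<bar> \<le> 1" if "tree_dom n t ys" for t ys
      using V(3) \<open>v \<in> V\<close> that by (auto simp: real_tree_def abs_le_iff)
    then show ?thesis
      unfolding sum_distrib_left \<beta>_def using p offset_term_exp_mean_le_one[OF \<delta> c]
      by (intro tree_expect_exp_sum_le_one) auto
  qed
  show ?thesis
    unfolding tree_expect_def \<beta>_def[symmetric] using V(1,2) \<open>0 < \<beta>\<close> exp_moment p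
    by (intro sum_weighted_Max_le_ln_card)
       (auto simp: finite_bool_lists_length path_prob_nonneg sum_path_prob tree_expect_def)
qed

theorem lemma1:
  fixes \<delta> c :: real and n :: nat and V :: "(nat \<Rightarrow> bool list \<Rightarrow> real) set"
  assumes "0 < \<delta>" "\<delta> < 1/2"
    and "finite V" "V \<noteq> {}"
    and "\<forall>v\<in>V. real_tree n (-1) 1 v"
    and "0 < c"
  shows "(\<forall>p. (\<forall>t ys. tree_dom n t ys \<longrightarrow> \<delta> \<le> p t ys \<and> p t ys \<le> 1 - \<delta>) \<longrightarrow>
            tree_expect n p (\<lambda>y. Max ((\<lambda>v. \<Sum>t<n.
                 eta (p t (take t y)) (y ! t) * v t (take t y) - c * (v t (take t y))\<^sup>2) ` V))
            \<le> ln (real (card V)) / (\<delta> * ln (1 + c / 2)))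
       \<and> (\<forall>p. (\<forall>t ys. tree_dom n t ys \<longrightarrow> 0 \<le> p t ys \<and> p t ys \<le> 1) \<longrightarrow>
            tree_expect n p (\<lambda>y. Max ((\<lambda>v. \<Sum>t\<in>{t. t < n \<and> \<delta> \<le> p t (take t y) \<and> p t (take t y) \<le> 1 - \<delta>}.
                 eta (p t (take t y)) (y ! t) * v t (take t y) - c * (v t (take t y))\<^sup>2) ` V))
            \<le> ln (real (card V)) / (\<delta> * ln (1 + c / 2)))"
proof (intro conjI allI impI, goal_cases)
  case (1 p)
  have "{t. t < n \<and> \<delta> \<le> p t (take t y) \<and> p t (take t y) \<le> 1 - \<delta>} = {..<n}" if "length y = n" for y
  proof -
    have "tree_dom n t (take t y)" if "t < n" for t
      using \<open>length y = n\<close> that by (simp add: tree_dom_def)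
    with 1 show ?thesis by auto
  qed
  then show ?case
    using assms 1
    by (intro ord_eq_le_trans[OF tree_expect_cong tree_expect_Max_offset_term_le])
       (fastforce simp flip: sum_restricted_eq_sum_offset_term)+
next
  case (2 p)
  then show ?case
    unfolding sum_restricted_eq_sum_offset_term using assms
    by (intro tree_expect_Max_offset_term_le) auto
qed

end
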